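(* The edge generating series of the Fibonacci posets is $$\sum_{n\ge0}\ell(\mathcal{F}_n)x^n=\frac{x^2}{(1-x-x^2)^2},$$ and for every $n\ge0$, $\ell(\mathcal{F}_n)=\frac{nL_n-F_n}{5}$. Moreover $\ell(\mathcal{F}_n)\sim\frac n5\varphi^n$ and $i(\mathcal{F}_n)\sim\frac{n}{\sqrt5\,\varphi}$, where $\varphi=(1+\sqrt5)/2$.
   Context: Steps: $U=(1,1)$, $D=(1,-1)$, $H=(1,0)$. A Fibonacci path of length $n$ is a lattice path from $(0,0)$ to $(n,0)$ with steps $U,D,H$ that stays in the strip $0\le y\le1$ and whose $H$ steps all lie on the $x$-axis. $\mathcal{F}_n$ is the set of Fibonacci paths of length $n$, partially ordered by $\gamma_1\le\gamma_2$ iff $\gamma_1$ lies weakly below $\gamma_2$. $\ell(P)$ is the number of edges (covering pairs) of the Hasse diagram of a finite poset $P$ and $i(P)=\ell(P)/|P|$. $F_n$ are the Fibonacci numbers ($F_0=0$, $F_1=1$, $F_{n+2}=F_{n+1}+F_n$) and $L_n$ the Lucas numbers ($L_0=2$, $L_1=1$, $L_{n+2}=L_{n+1}+L_n$). $a_n\sim b_n$ means $a_n/b_n\to1$. *)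

theory Defs
  imports "HOL-Analysis.Analysis" "HOL-Computational_Algebra.Formal_Power_Series"
    "HOL-Library.Landau_Symbols" "HOL-Number_Theory.Fib"
begin

text \<open>Steps U = (1,1), D = (1,-1), H = (1,0) of a lattice path.\<close>
datatype step = U | D | H

fun step_dy :: "step \<Rightarrow> int" where
  "step_dy U = 1" | "step_dy D = -1" | "step_dy H = 0"

definition ht :: "step list \<Rightarrow> nat \<Rightarrow> int" where
  "ht p k = sum_list (map step_dy (take k p))"

definition fib_path :: "nat \<Rightarrow> step list \<Rightarrow> bool" where
  "fib_path n p \<longleftrightarrow> length p = n \<and> ht p n = 0
     \<and> (\<forall>k\<le>n. 0 \<le> ht p k \<and> ht p k \<le> 1)
     \<and> (\<forall>k<n. p ! k = H \<longrightarrow> ht p k = 0)"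

definition FibPaths :: "nat \<Rightarrow> step list set" where
  "FibPaths n = {p. fib_path n p}"

text \<open>p lies weakly below q (paths are piecewise linear between lattice points,
  so it suffices to compare heights at integer abscissae).\<close>
definition below :: "step list \<Rightarrow> step list \<Rightarrow> bool" where
  "below p q \<longleftrightarrow> (\<forall>k\<le>length p. ht p k \<le> ht q k)"

definition hasse_edges :: "'a set \<Rightarrow> ('a \<Rightarrow> 'a \<Rightarrow> bool) \<Rightarrow> nat" where
  "hasse_edges P le = card {(a, b). a \<in> P \<and> b \<in> P \<and> le a b \<and> a \<noteq> b \<and>
      \<not> (\<exists>c\<in>P. le a c \<and> le c b \<and> c \<noteq> a \<and> c \<noteq> b)}"

definition ell :: "nat \<Rightarrow> nat" where
  "ell n = hasse_edges (FibPaths n) below"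

definition iota :: "nat \<Rightarrow> real" where
  "iota n = real (ell n) / real (card (FibPaths n))"

fun lucas :: "nat \<Rightarrow> nat" where
  "lucas 0 = 2" | "lucas (Suc 0) = 1" | "lucas (Suc (Suc n)) = lucas (Suc n) + lucas n"

definition phi :: real where "phi = (1 + sqrt 5) / 2"

end

theory Submission
  imports Defs
begin

(*
  A Fibonacci path of length n+2 is either H followed by a path of
  length n+1, or U D followed by a path of length n; so F_{n+2} is the disjoint union
  of the down-set A = H.F_{n+1} and the up-set B = UD.F_n.  Both pieces are convex, and
  prefixing a fixed step is an order embedding, so the covering pairs inside A and
  inside B are exactly the covering pairs of F_{n+1} and of F_n.  The only covering
  pairs from A to B are (HH.p, UD.p) for p in F_n, and nothing in B lies below A.
  This gives the recurrence  ell(n+2) = ell(n+1) + ell(n) + F_{n+1},  from which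
  the generating function and the closed form (n L_n - F_n)/5 follow.  The asymptotics
  come from the Binet formulas for L_n and F_n, together with |F_n| = F_{n+1}.
*)

section \<open>Recursive structure of Fibonacci paths\<close>

lemma ht_0 [simp]: "ht p 0 = 0"
  by (simp add: ht_def)

lemma ht_Cons_Suc [simp]: "ht (s # p) (Suc k) = step_dy s + ht p k"
  by (simp add: ht_def)

lemma all_le_Suc: "(\<forall>k\<le>Suc n. P k) \<longleftrightarrow> P 0 \<and> (\<forall>k\<le>n. P (Suc k))"
  by (metis Suc_le_mono le0 not0_implies_Suc)

lemma all_less_Suc: "(\<forall>k<Suc n. P k) \<longleftrightarrow> P 0 \<and> (\<forall>k<n. P (Suc k))"
  by (metis Suc_less_eq zero_less_Suc not0_implies_Suc)

lemma fib_path_H: "fib_path (Suc n) (H # p) \<longleftrightarrow> fib_path n p"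
  unfolding fib_path_def by (simp add: all_le_Suc all_less_Suc)

lemma fib_path_UD: "fib_path (Suc (Suc n)) (U # D # p) \<longleftrightarrow> fib_path n p"
  unfolding fib_path_def by (simp add: all_le_Suc all_less_Suc)

lemma fib_path_Suc:
  "fib_path (Suc n) p \<longleftrightarrow>
     (\<exists>q. p = H # q \<and> fib_path n q) \<or> (\<exists>m q. n = Suc m \<and> p = U # D # q \<and> fib_path m q)"
proof
  assume fp: "fib_path (Suc n) p"
  then obtain s q where p: "p = s # q" unfolding fib_path_def by (cases p) auto
  show "(\<exists>q. p = H # q \<and> fib_path n q) \<or> (\<exists>m q. n = Suc m \<and> p = U # D # q \<and> fib_path m q)"
  proof (cases s)
    case U
    then obtain m where n: "n = Suc m"
      using fp unfolding p fib_path_def by (cases n) auto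
    then obtain t r where q: "q = t # r"
      using fp unfolding p fib_path_def by (cases q) auto
    have "t = D"
      using fp unfolding p q U n fib_path_def by (cases t) (auto simp: all_le_Suc all_less_Suc)
    moreover have "fib_path m r" using fp fib_path_UD \<open>t = D\<close> unfolding p q U n by simp
    ultimately show ?thesis using n p q U by blast
  next
    case D then show ?thesis using fp unfolding p fib_path_def by (auto simp: all_le_Suc)
  next
    case H then show ?thesis
      using fp unfolding p fib_path_def by (auto simp: all_le_Suc all_less_Suc)
  qed
qed (auto simp: fib_path_H fib_path_UD)

lemma FibPaths_0: "FibPaths 0 = {[]}"
  by (auto simp: FibPaths_def fib_path_def)

lemma FibPaths_1: "FibPaths (Suc 0) = {[H]}"
  using FibPaths_0 by (auto simp: FibPaths_def fib_path_Suc)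

lemma FibPaths_SS:
  "FibPaths (Suc (Suc n)) = (Cons H) ` FibPaths (Suc n) \<union> (\<lambda>p. U # D # p) ` FibPaths n"
  by (auto simp: FibPaths_def fib_path_Suc[of "Suc n"])

lemma FibPaths_Suc_cases:
  assumes "p \<in> FibPaths (Suc n)"
  obtains q where "p = H # q" "q \<in> FibPaths n" | q where "p = U # D # q"
  using assms by (auto simp: FibPaths_def fib_path_Suc)

lemma length_FibPaths: "p \<in> FibPaths n \<Longrightarrow> length p = n"
  by (simp add: FibPaths_def fib_path_def)

lemma finite_FibPaths: "finite (FibPaths n)"
proof -
  have "finite (FibPaths n) \<and> finite (FibPaths (Suc n))"
    by (induction n) (auto simp: FibPaths_0 FibPaths_1 FibPaths_SS)
  then show ?thesis by simp
qed

lemma card_FibPaths: "card (FibPaths n) = fib (Suc n)"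
proof (induction n rule: fib.induct)
  case (3 n)
  have "card (FibPaths (Suc (Suc n))) = card (FibPaths (Suc n)) + card (FibPaths n)"
    unfolding FibPaths_SS
    by (subst card_Un_disjoint) (auto simp: finite_FibPaths card_image inj_on_def)
  then show ?case using 3 by simp
qed (simp_all add: FibPaths_0 FibPaths_1)

lemma below_Cons:
  "below (s # p) (t # q) \<longleftrightarrow> (\<forall>k\<le>length p. step_dy s + ht p k \<le> step_dy t + ht q k)"
  unfolding below_def by (simp add: all_le_Suc)

lemma below_same: "below (s # p) (s # q) \<longleftrightarrow> below p q"
  unfolding below_Cons by (simp add: below_def)

lemma not_below_U_H: "\<not> below (U # p) (H # q)"
  by (auto simp: below_Cons)

lemma not_below_HU_UD: "\<not> below (H # U # p) (U # D # q)"
  unfolding below_Cons by (auto intro!: exI[of _ 1])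

lemma below_HH_UD: "below (H # H # p) (U # D # q) \<longleftrightarrow> below p q"
  unfolding below_Cons by (simp add: all_le_Suc below_def)

lemma below_refl: "below p p"
  by (simp add: below_def)

lemma below_antisym: "length p = length q \<Longrightarrow> below p q \<Longrightarrow> below q p \<Longrightarrow> p = q"
proof (induction p arbitrary: q)
  case (Cons s p)
  then obtain t q' where q: "q = t # q'" by (cases q) auto
  have "step_dy s = step_dy t"
    using Cons.prems unfolding q below_Cons by (auto dest!: spec[of _ 0])
  then have "s = t" by (cases s; cases t) auto
  then show ?case using Cons q by (simp add: below_same)
qed simp

lemma below_antisym_FibPaths:
  "p \<in> FibPaths n \<Longrightarrow> q \<in> FibPaths n \<Longrightarrow> below p q \<Longrightarrow> below q p \<Longrightarrow> p = q"
  using below_antisym length_FibPaths by metis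

section \<open>Covering pairs in a finite poset\<close>

definition covers :: "'a set \<Rightarrow> ('a \<Rightarrow> 'a \<Rightarrow> bool) \<Rightarrow> 'a \<Rightarrow> 'a \<Rightarrow> bool" where
  "covers P le a b \<longleftrightarrow> a \<in> P \<and> b \<in> P \<and> le a b \<and> a \<noteq> b \<and>
     \<not> (\<exists>c\<in>P. le a c \<and> le c b \<and> c \<noteq> a \<and> c \<noteq> b)"

lemma hasse_edges_covers: "hasse_edges P le = card {(a, b). covers P le a b}"
  by (simp add: hasse_edges_def covers_def)

lemma covers_convex:
  assumes "S \<subseteq> P"
    and "\<And>a b c. a \<in> S \<Longrightarrow> b \<in> S \<Longrightarrow> c \<in> P \<Longrightarrow> le a c \<Longrightarrow> le c b \<Longrightarrow> c \<in> S"
    and "a \<in> S" "b \<in> S"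
  shows "covers P le a b \<longleftrightarrow> covers S le a b"
  unfolding covers_def using assms by blast

lemma covers_image:
  assumes "\<And>x y. x \<in> S \<Longrightarrow> y \<in> S \<Longrightarrow> le (f x) (f y) \<longleftrightarrow> le' x y"
    and "inj_on f S" "a \<in> S" "b \<in> S"
  shows "covers (f ` S) le (f a) (f b) \<longleftrightarrow> covers S le' a b"
  unfolding covers_def using assms by (auto simp: inj_on_eq_iff)

section \<open>Covering pairs of the Fibonacci posets\<close>

abbreviation fcovers :: "nat \<Rightarrow> step list \<Rightarrow> step list \<Rightarrow> bool" where
  "fcovers n \<equiv> covers (FibPaths n) below"

lemma ell_covers: "ell n = card {(a, b). fcovers n a b}"
  by (simp add: ell_def hasse_edges_covers)

text \<open>The paths starting with H form a down-set of F_{n+2}, isomorphic to F_{n+1}.\<close>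

lemma fcovers_H:
  assumes "a \<in> FibPaths (Suc n)" "b \<in> FibPaths (Suc n)"
  shows "fcovers (Suc (Suc n)) (H # a) (H # b) \<longleftrightarrow> fcovers (Suc n) a b"
proof -
  have "fcovers (Suc (Suc n)) (H # a) (H # b) \<longleftrightarrow> covers (Cons H ` FibPaths (Suc n)) below (H # a) (H # b)"
    by (rule covers_convex) (use assms in \<open>auto simp: FibPaths_SS not_below_U_H\<close>)
  also have "\<dots> \<longleftrightarrow> fcovers (Suc n) a b"
    by (rule covers_image) (use assms in \<open>auto simp: below_same\<close>)
  finally show ?thesis .
qed

text \<open>The paths starting with U D form an up-set of F_{n+2}, isomorphic to F_n.\<close>

lemma fcovers_UD:
  assumes "a \<in> FibPaths n" "b \<in> FibPaths n"
  shows "fcovers (Suc (Suc n)) (U # D # a) (U # D # b) \<longleftrightarrow> fcovers n a b"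
proof -
  have "fcovers (Suc (Suc n)) (U # D # a) (U # D # b)
      \<longleftrightarrow> covers ((\<lambda>p. U # D # p) ` FibPaths n) below (U # D # a) (U # D # b)"
    by (rule covers_convex) (use assms in \<open>auto simp: FibPaths_SS not_below_U_H\<close>)
  also have "\<dots> \<longleftrightarrow> fcovers n a b"
    by (rule covers_image) (use assms in \<open>auto simp: below_same inj_on_def\<close>)
  finally show ?thesis .
qed

lemma fcovers_H_UD:
  assumes a: "a \<in> FibPaths (Suc n)" and b: "b \<in> FibPaths n"
  shows "fcovers (Suc (Suc n)) (H # a) (U # D # b) \<longleftrightarrow> a = H # b"
proof
  assume cov: "fcovers (Suc (Suc n)) (H # a) (U # D # b)"
  then have le: "below (H # a) (U # D # b)" by (simp add: covers_def)
  from a obtain q where q: "a = H # q" "q \<in> FibPaths n"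
    using le not_below_HU_UD by (cases rule: FibPaths_Suc_cases) auto
  show "a = H # b"
  proof (rule ccontr)
    assume "a \<noteq> H # b"
    moreover have "U # D # q \<in> FibPaths (Suc (Suc n))" using q by (simp add: FibPaths_SS)
    moreover have "below (H # a) (U # D # q)" using q by (simp add: below_HH_UD below_refl)
    moreover have "below (U # D # q) (U # D # b)" using le q by (simp add: below_HH_UD below_same)
    ultimately show False using cov q unfolding covers_def by auto
  qed
next
  assume ab: "a = H # b"
  have between: "c = H # H # b \<or> c = U # D # b"
    if c: "c \<in> FibPaths (Suc (Suc n))" "below (H # H # b) c" "below c (U # D # b)" for c
  proof -
    from c(1) consider (H) c' where "c = H # c'" "c' \<in> FibPaths (Suc n)"
      | (UD) c' where "c = U # D # c'" "c' \<in> FibPaths n"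
      by (auto simp: FibPaths_SS)
    then show ?thesis
    proof cases
      case H
      from H(2) obtain q where q: "c = H # H # q" "q \<in> FibPaths n"
        using H(1) c(3) not_below_HU_UD by (cases rule: FibPaths_Suc_cases) auto
      then have "q = b"
        using c(2,3) b by (intro below_antisym_FibPaths) (auto simp: below_same below_HH_UD)
      then show ?thesis using q by simp
    next
      case UD
      then have "c' = b"
        using c(2,3) b by (intro below_antisym_FibPaths) (auto simp: below_same below_HH_UD)
      then show ?thesis using UD by simp
    qed
  qed
  have "H # b \<in> FibPaths (Suc n)" using a ab by simp
  then show "fcovers (Suc (Suc n)) (H # a) (U # D # b)"
    unfolding covers_def ab
    using between b by (auto simp: FibPaths_SS below_HH_UD below_refl)
qed

lemma fcovers_SS:
  "{(x, y). fcovers (Suc (Suc n)) x y} =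
     (\<lambda>(a, b). (H # a, H # b)) ` {(a, b). fcovers (Suc n) a b}
   \<union> (\<lambda>(a, b). (U # D # a, U # D # b)) ` {(a, b). fcovers n a b}
   \<union> (\<lambda>p. (H # H # p, U # D # p)) ` FibPaths n"
  (is "?L = ?A \<union> ?B \<union> ?C")
proof (intro equalityI subsetI)
  fix z assume "z \<in> ?L"
  then obtain x y where z: "z = (x, y)" and cov: "fcovers (Suc (Suc n)) x y" by auto
  then have "x \<in> FibPaths (Suc (Suc n))" "y \<in> FibPaths (Suc (Suc n))" "below x y"
    by (auto simp: covers_def)
  then consider
      (HH) a b where "x = H # a" "y = H # b" "a \<in> FibPaths (Suc n)" "b \<in> FibPaths (Suc n)"
    | (HU) a b where "x = H # a" "y = U # D # b" "a \<in> FibPaths (Suc n)" "b \<in> FibPaths n"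
    | (UU) a b where "x = U # D # a" "y = U # D # b" "a \<in> FibPaths n" "b \<in> FibPaths n"
    by (auto simp: FibPaths_SS not_below_U_H)
  then show "z \<in> ?A \<union> ?B \<union> ?C"
  proof cases
    case HH then show ?thesis using cov z fcovers_H by auto
  next
    case HU then show ?thesis using cov z fcovers_H_UD by auto
  next
    case UU then show ?thesis using cov z fcovers_UD by auto
  qed
next
  fix z assume "z \<in> ?A \<union> ?B \<union> ?C"
  then consider
      (HH) a b where "z = (H # a, H # b)" "fcovers (Suc n) a b"
    | (UU) a b where "z = (U # D # a, U # D # b)" "fcovers n a b"
    | (HU) p where "z = (H # H # p, U # D # p)" "p \<in> FibPaths n"
    by auto
  then show "z \<in> ?L"
  proof cases
    case HH then show ?thesis using fcovers_H by (auto simp: covers_def[of "FibPaths (Suc n)"])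
  next
    case UU then show ?thesis using fcovers_UD by (auto simp: covers_def[of "FibPaths n"])
  next
    case HU
    then have "H # p \<in> FibPaths (Suc n)" by (simp add: FibPaths_def fib_path_H)
    then show ?thesis using HU fcovers_H_UD by auto
  qed
qed

lemma finite_fcovers: "finite {(a, b). fcovers n a b}"
proof (rule finite_subset)
  show "{(a, b). fcovers n a b} \<subseteq> FibPaths n \<times> FibPaths n" by (auto simp: covers_def)
qed (simp add: finite_FibPaths)

lemma ell_0: "ell 0 = 0"
proof -
  have "{(a, b). fcovers 0 a b} = {}" by (auto simp: covers_def FibPaths_0)
  then show ?thesis by (simp add: ell_covers)
qed

lemma ell_1: "ell (Suc 0) = 0"
proof -
  have "{(a, b). fcovers (Suc 0) a b} = {}" by (auto simp: covers_def FibPaths_1)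
  then show ?thesis by (simp add: ell_covers)
qed

text \<open>The three families of covering pairs are disjoint (they are told apart by the
  first steps of the two paths), and the prefixing maps are injective.\<close>

lemma ell_rec: "ell (Suc (Suc n)) = ell (Suc n) + ell n + fib (Suc n)"
proof -
  let ?A = "(\<lambda>(a, b). (H # a, H # b)) ` {(a, b). fcovers (Suc n) a b}"
  let ?B = "(\<lambda>(a, b). (U # D # a, U # D # b)) ` {(a, b). fcovers n a b}"
  let ?C = "(\<lambda>p. (H # H # p, U # D # p)) ` FibPaths n"
  have fin: "finite ?A" "finite ?B" "finite ?C"
    using finite_fcovers finite_FibPaths by auto
  have "ell (Suc (Suc n)) = card (?A \<union> ?B \<union> ?C)"
    by (simp add: ell_covers fcovers_SS)
  also have "\<dots> = card ?A + card ?B + card ?C"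
    using fin by (subst card_Un_disjoint; auto simp: card_Un_disjoint)+
  also have "card ?A = ell (Suc n)"
    by (subst card_image) (auto simp: inj_on_def ell_covers)
  also have "card ?B = ell n"
    by (subst card_image) (auto simp: inj_on_def ell_covers)
  also have "card ?C = fib (Suc n)"
    by (subst card_image) (auto simp: inj_on_def card_FibPaths)
  finally show ?thesis .
qed

section \<open>Generating function and closed form\<close>

lemma fps_nth_times_fib_denom:
  fixes a :: "nat \<Rightarrow> 'a::comm_ring_1"
  shows "fps_nth (Abs_fps a * (1 - fps_X - fps_X ^ 2)) n =
    a n - (if n \<ge> 1 then a (n - 1) else 0) - (if n \<ge> 2 then a (n - 2) else 0)"
proof -
  have "Abs_fps a * (1 - fps_X - fps_X ^ 2) = Abs_fps a - fps_X * Abs_fps a - fps_X ^ 2 * Abs_fps a"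
    by (simp add: algebra_simps)
  then show ?thesis by (simp add: fps_X_power_mult_nth fps_X_mult_nth)
qed

lemma fps_fib: "Abs_fps (\<lambda>n. real (fib n)) * (1 - fps_X - fps_X ^ 2) = fps_X"
  apply (rule fps_ext)
  subgoal for n by (cases n rule: fib.cases) (simp_all add: fps_nth_times_fib_denom)
  done

lemma fps_ell:
  "Abs_fps (\<lambda>n. real (ell n)) * (1 - fps_X - fps_X ^ 2) = fps_X * Abs_fps (\<lambda>n. real (fib n))"
  apply (rule fps_ext)
  subgoal for n
    by (cases n rule: fib.cases) (simp_all add: fps_nth_times_fib_denom fps_X_mult_nth ell_rec ell_0 ell_1)
  done

lemma ell_generating_function:
  "Abs_fps (\<lambda>n. real (ell n)) = fps_X ^ 2 / (1 - fps_X - fps_X ^ 2) ^ 2"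
proof -
  let ?E = "Abs_fps (\<lambda>n. real (ell n))" and ?B = "1 - fps_X - fps_X ^ 2 :: real fps"
  have "fps_nth ?B 0 = 1"
    by (simp only: fps_sub_nth fps_one_nth fps_X_nth fps_X_power_nth) simp
  then have B2: "?B ^ 2 \<noteq> 0" by (metis fps_zero_nth zero_neq_one power_not_zero)
  have "?E * ?B ^ 2 = (?E * ?B) * ?B" by (simp add: power2_eq_square algebra_simps)
  also have "\<dots> = fps_X * (Abs_fps (\<lambda>n. real (fib n)) * ?B)" by (simp only: fps_ell mult.assoc)
  also have "\<dots> = fps_X ^ 2" by (simp only: fps_fib) (simp add: power2_eq_square)
  finally have "fps_X ^ 2 / ?B ^ 2 = ?E * ?B ^ 2 / ?B ^ 2" by simp
  also have "\<dots> = ?E" using B2 by (rule nonzero_mult_div_cancel_right)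
  finally show ?thesis by simp
qed

text \<open>Lucas numbers: L_{n+1} + 2 L_n = 5 F_{n+1}, which is what makes (n L_n - F_n)/5
  satisfy the recurrence of ell.\<close>

lemma lucas_fib: "lucas (Suc n) + 2 * lucas n = 5 * fib (Suc n)"
  by (induction n rule: fib.induct) auto

lemma ell_closed_form: "real (ell n) = (real n * real (lucas n) - real (fib n)) / 5"
proof (induction n rule: fib.induct)
  case (3 n)
  have "real (lucas (Suc n)) + 2 * real (lucas n) = 5 * real (fib (Suc n))"
    using lucas_fib[of n] by (metis of_nat_add of_nat_mult of_nat_numeral)
  then show ?case using 3 by (simp add: ell_rec field_simps)
qed (simp_all add: ell_0 ell_1)

section \<open>Asymptotics\<close>

definition psi :: real where "psi = (1 - sqrt 5) / 2"

lemma phi_gt_1: "phi > 1"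
  by (simp add: phi_def)

lemma lucas_binet: "real (lucas n) = phi ^ n + psi ^ n"
proof (induction n rule: fib.induct)
  case (3 n)
  have sq: "phi ^ 2 = phi + 1" "psi ^ 2 = psi + 1"
    by (simp_all add: phi_def psi_def field_simps power2_eq_square)
  have "real (lucas (Suc (Suc n))) = phi ^ n * (phi + 1) + psi ^ n * (psi + 1)"
    using 3 by (simp add: algebra_simps)
  also have "\<dots> = phi ^ n * phi ^ 2 + psi ^ n * psi ^ 2" by (simp only: sq)
  also have "\<dots> = phi ^ Suc (Suc n) + psi ^ Suc (Suc n)" by (simp add: power2_eq_square algebra_simps)
  finally show ?case .
qed (simp_all add: phi_def psi_def field_simps)

lemma fib_binet: "real (fib n) = (phi ^ n - psi ^ n) / sqrt 5"
  unfolding phi_def psi_def by (rule fib_closed_form)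

lemma psi_phi_power_tendsto_0: "(\<lambda>n. (psi / phi) ^ n) \<longlonglongrightarrow> 0"
proof (rule LIMSEQ_power_zero)
  have "\<bar>psi\<bar> < phi" by (simp add: psi_def phi_def abs_if field_simps)
  then show "norm (psi / phi) < 1" using phi_gt_1 by (simp add: abs_divide)
qed

lemma ell_ratio:
  assumes "n \<ge> 1"
  shows "real (ell n) / (real n / 5 * phi ^ n)
    = 1 + (psi / phi) ^ n - (1 - (psi / phi) ^ n) / sqrt 5 * inverse (real n)"
proof -
  define a b m s where "a = phi ^ n" "b = psi ^ n" "m = real n" "s = sqrt 5"
  have pos: "a > 0" "m > 0" "s > 0" using phi_gt_1 assms by (auto simp: a_b_m_s_def)
  have e: "real (ell n) = (m * (a + b) - (a - b) / s) / 5"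
    by (simp add: ell_closed_form lucas_binet fib_binet a_b_m_s_def)
  have "real (ell n) / (m / 5 * a) = 1 + b / a - (1 - b / a) / s * inverse m"
    unfolding e using pos by (simp add: field_simps)
  then show ?thesis by (simp only: a_b_m_s_def power_divide)
qed

lemma ell_asymp: "(\<lambda>n. real (ell n)) \<sim>[at_top] (\<lambda>n. real n / 5 * phi ^ n)"
proof (rule asymp_equivI')
  define r where "r n = (psi / phi) ^ n" for n
  have "(\<lambda>n. 1 + r n - (1 - r n) / sqrt 5 * inverse (real n))
      \<longlonglongrightarrow> 1 + 0 - (1 - 0) / sqrt 5 * 0"
    using psi_phi_power_tendsto_0 unfolding r_def[symmetric]
    by (intro tendsto_intros lim_inverse_n) auto
  moreover have "eventually (\<lambda>n. 1 + r n - (1 - r n) / sqrt 5 * inverse (real n)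
      = real (ell n) / (real n / 5 * phi ^ n)) at_top"
    using eventually_ge_at_top[of 1] by eventually_elim (simp only: ell_ratio r_def)
  ultimately show "((\<lambda>n. real (ell n) / (real n / 5 * phi ^ n)) \<longlongrightarrow> 1) at_top"
    by (simp add: Lim_transform_eventually)
qed

lemma card_FibPaths_asymp:
  "(\<lambda>n. real (card (FibPaths n))) \<sim>[at_top] (\<lambda>n. phi ^ Suc n / sqrt 5)"
proof (rule asymp_equivI')
  have "(\<lambda>n. real (fib n) / (phi ^ n / sqrt 5)) \<longlonglongrightarrow> 1"
    unfolding phi_def by (rule fib_asymptotics)
  then show "((\<lambda>n. real (card (FibPaths n)) / (phi ^ Suc n / sqrt 5)) \<longlongrightarrow> 1) at_top"
    unfolding card_FibPaths by (rule LIMSEQ_Suc)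
qed

lemma iota_asymp: "iota \<sim>[at_top] (\<lambda>n. real n / (sqrt 5 * phi))"
proof -
  have "iota \<sim>[at_top] (\<lambda>n. (real n / 5 * phi ^ n) / (phi ^ Suc n / sqrt 5))"
    unfolding iota_def[abs_def] by (intro asymp_equiv_divide ell_asymp card_FibPaths_asymp)
  also have "(\<lambda>n. (real n / 5 * phi ^ n) / (phi ^ Suc n / sqrt 5)) = (\<lambda>n. real n / (sqrt 5 * phi))"
  proof
    fix n
    have "phi ^ n > 0" using phi_gt_1 by simp
    then have "(real n / 5 * phi ^ n) / (phi ^ Suc n / sqrt 5) = (sqrt 5 * real n) / (sqrt 5 * (sqrt 5 * phi))"
      by (simp add: field_simps)
    also have "\<dots> = real n / (sqrt 5 * phi)" by (rule mult_divide_mult_cancel_left) simp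
    finally show "(real n / 5 * phi ^ n) / (phi ^ Suc n / sqrt 5) = real n / (sqrt 5 * phi)" .
  qed
  finally show ?thesis .
qed

theorem mainTheorem16:
  shows "Abs_fps (\<lambda>n. real (ell n)) = fps_X ^ 2 / (1 - fps_X - fps_X ^ 2) ^ 2
    \<and> (\<forall>n. real (ell n) = (real n * real (lucas n) - real (fib n)) / 5)
    \<and> ((\<lambda>n. real (ell n)) \<sim>[at_top] (\<lambda>n. real n / 5 * phi ^ n))
    \<and> (iota \<sim>[at_top] (\<lambda>n. real n / (sqrt 5 * phi)))"
  using ell_generating_function ell_closed_form ell_asymp iota_asymp by blast

end
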